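(* Let $\varphi$ be an LDL$_F$ formula over a set of Boolean variables $X\cup Y$ ($X\cap Y=\emptyset$), and let $p,q$ be fresh Boolean variables. Let $\mathcal{G}_\varphi$ be the four-player iterated Boolean game with QPLDL$_F$ goals over $X\cup Y\cup\{p,q\}$ where Player 1 controls $X$ with goal $\gamma_1=\exists\varphi$; Player 2 controls $Y$ with goal $\gamma_2=\forall\neg\varphi$; Player 3 controls $p$ with goal $\gamma_3=\exists\varphi\vee(p\leftrightarrow q)$; Player 4 controls $q$ with goal $\gamma_4=\exists\varphi\vee\neg(p\leftrightarrow q)$. Then the synthesis problem for $\varphi$ in which the system controls $X$ and the environment controls $Y$ has a positive answer if and only if $\mathcal{G}_\varphi$ has a Nash equilibrium.
   Context: LDL$_F$ formulas over a finite set $\Phi$ of Boolean variables: $\varphi ::= p \mid \neg\varphi \mid \varphi\wedge\varphi \mid \varphi\vee\varphi \mid \langle\rho\rangle\varphi \mid [\rho]\varphi$, $\rho ::= \psi \mid \varphi? \mid \rho+\rho \mid \rho;\rho \mid \rho^*$ ($\psi$ propositional), with standard semantics over finite traces. For $\pi^\infty\in(2^\Phi)^\omega$: $\pi^\infty\models\exists\psi$ iff some finite prefix of $\pi^\infty$ satisfies $\psi$; $\pi^\infty\models\forall\psi$ iff every finite prefix satisfies $\psi$. In $\gamma_3,\gamma_4$ the disjunct $p\leftrightarrow q$ (resp. $\neg(p\leftrightarrow q)$) is evaluated on the play as an LDL$_F$ formula, i.e. it holds iff it holds in the first valuation of the play. Iterated Boolean game: players $N=\{1,\dots,n\}$, each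 controlling a part $\Phi_i$ of a partition of $\Phi$; strategies are finite state machines $\sigma_i=(S_i,s_i^0,\delta_i:S_i\times2^\Phi\to S_i,\tau_i:S_i\to2^{\Phi_i})$; a profile generates the play $\pi^\infty(\vec\sigma)=v_0v_1\cdots$, $v_t=\bigcup_i\tau_i(s_i^t)$, $s_i^{t+1}=\delta_i(s_i^t,v_t)$; $\vec\sigma$ is a Nash equilibrium if no player $i$ has a strategy $\sigma'_i$ with $\pi^\infty(\vec\sigma_{-i},\sigma'_i)\models\gamma_i$ and $\pi^\infty(\vec\sigma)\not\models\gamma_i$. The synthesis problem for $\varphi$ (system controls $X$, environment controls $Y$, both choosing their valuations simultaneously at each round) has a positive answer iff there is a finite-state strategy of the system (controlling $X$) such that for every finite-state strategy of the environment (controlling $Y$) the resulting infinite play has a finite prefix satisfying $\varphi$. *)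

theory Defs
  imports Main
begin

datatype 'v pl = PVar 'v | PNot "'v pl" | PAnd "'v pl" "'v pl" | POr "'v pl" "'v pl"

datatype 'v ldl =
    Prop 'v | Neg "'v ldl" | And "'v ldl" "'v ldl" | Or "'v ldl" "'v ldl"
  | Diam "'v re" "'v ldl" | Box "'v re" "'v ldl"
and 'v re =
    Base "'v pl" | Test "'v ldl" | Plus "'v re" "'v re" | Seq "'v re" "'v re" | Star "'v re"

fun pl_sat :: "'v set \<Rightarrow> 'v pl \<Rightarrow> bool" where
  "pl_sat v (PVar x) = (x \<in> v)"
| "pl_sat v (PNot a) = (\<not> pl_sat v a)"
| "pl_sat v (PAnd a b) = (pl_sat v a \<and> pl_sat v b)"
| "pl_sat v (POr a b) = (pl_sat v a \<or> pl_sat v b)"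

fun pl_atoms :: "'v pl \<Rightarrow> 'v set" where
  "pl_atoms (PVar x) = {x}"
| "pl_atoms (PNot a) = pl_atoms a"
| "pl_atoms (PAnd a b) = pl_atoms a \<union> pl_atoms b"
| "pl_atoms (POr a b) = pl_atoms a \<union> pl_atoms b"

fun atoms :: "'v ldl \<Rightarrow> 'v set" and re_atoms :: "'v re \<Rightarrow> 'v set" where
  "atoms (Prop x) = {x}"
| "atoms (Neg a) = atoms a"
| "atoms (And a b) = atoms a \<union> atoms b"
| "atoms (Or a b) = atoms a \<union> atoms b"
| "atoms (Diam r a) = re_atoms r \<union> atoms a"
| "atoms (Box r a) = re_atoms r \<union> atoms a"
| "re_atoms (Base a) = pl_atoms a"
| "re_atoms (Test a) = atoms a"
| "re_atoms (Plus r s) = re_atoms r \<union> re_atoms s"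
| "re_atoms (Seq r s) = re_atoms r \<union> re_atoms s"
| "re_atoms (Star r) = re_atoms r"

fun sat :: "'v set list \<Rightarrow> nat \<Rightarrow> 'v ldl \<Rightarrow> bool"
and rel :: "'v set list \<Rightarrow> 'v re \<Rightarrow> (nat \<times> nat) set" where
  "sat tr i (Prop x) = (i < length tr \<and> x \<in> tr ! i)"
| "sat tr i (Neg a) = (\<not> sat tr i a)"
| "sat tr i (And a b) = (sat tr i a \<and> sat tr i b)"
| "sat tr i (Or a b) = (sat tr i a \<or> sat tr i b)"
| "sat tr i (Diam r a) = (\<exists>j. (i, j) \<in> rel tr r \<and> j < length tr \<and> sat tr j a)"
| "sat tr i (Box r a) = (\<forall>j. (i, j) \<in> rel tr r \<and> j < length tr \<longrightarrow> sat tr j a)"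
| "rel tr (Base b) = {(i, Suc i) | i. Suc i < length tr \<and> pl_sat (tr ! i) b}"
| "rel tr (Test a) = {(i, i) | i. i < length tr \<and> sat tr i a}"
| "rel tr (Plus r s) = rel tr r \<union> rel tr s"
| "rel tr (Seq r s) = rel tr r O rel tr s"
| "rel tr (Star r) = (rel tr r)\<^sup>*"

definition trace_sat :: "'v set list \<Rightarrow> 'v ldl \<Rightarrow> bool" where
  "trace_sat tr a = sat tr 0 a"

definition prefix_of :: "(nat \<Rightarrow> 'v set) \<Rightarrow> nat \<Rightarrow> 'v set list" where
  "prefix_of pi k = map pi [0..<Suc k]"

definition ex_sat :: "'v ldl \<Rightarrow> (nat \<Rightarrow> 'v set) \<Rightarrow> bool" where
  "ex_sat a pi = (\<exists>k. trace_sat (prefix_of pi k) a)"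

definition all_sat :: "'v ldl \<Rightarrow> (nat \<Rightarrow> 'v set) \<Rightarrow> bool" where
  "all_sat a pi = (\<forall>k. trace_sat (prefix_of pi k) a)"

text \<open>Plain LDL_F formula evaluated on a play: it holds in the first valuation.\<close>
definition first_sat :: "'v ldl \<Rightarrow> (nat \<Rightarrow> 'v set) \<Rightarrow> bool" where
  "first_sat a pi = trace_sat [pi 0] a"

definition iff_f :: "'v ldl \<Rightarrow> 'v ldl \<Rightarrow> 'v ldl" where
  "iff_f a b = Or (And a b) (And (Neg a) (Neg b))"

section \<open>Finite state machine strategies (states drawn from nat, WLOG)\<close>

record 'v strat =
  St :: "nat set"
  init :: nat
  delta :: "nat \<Rightarrow> 'v set \<Rightarrow> nat"
  out :: "nat \<Rightarrow> 'v set"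

definition valid_strat :: "'v set \<Rightarrow> 'v set \<Rightarrow> 'v strat \<Rightarrow> bool" where
  "valid_strat Phi Phii s =
     (finite (St s) \<and> init s \<in> St s
      \<and> (\<forall>x \<in> St s. \<forall>v. v \<subseteq> Phi \<longrightarrow> delta s x v \<in> St s)
      \<and> (\<forall>x \<in> St s. out s x \<subseteq> Phii))"

fun states :: "'p set \<Rightarrow> ('p \<Rightarrow> 'v strat) \<Rightarrow> nat \<Rightarrow> 'p \<Rightarrow> nat" where
  "states N sg 0 = (\<lambda>i. init (sg i))"
| "states N sg (Suc t) =
     (let v = (\<Union>j\<in>N. out (sg j) (states N sg t j))
      in (\<lambda>i. delta (sg i) (states N sg t i) v))"

definition play :: "'p set \<Rightarrow> ('p \<Rightarrow> 'v strat) \<Rightarrow> nat \<Rightarrow> 'v set" where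
  "play N sg t = (\<Union>j\<in>N. out (sg j) (states N sg t j))"

definition is_NE :: "'p set \<Rightarrow> ('p \<Rightarrow> 'v set) \<Rightarrow> ('p \<Rightarrow> (nat \<Rightarrow> 'v set) \<Rightarrow> bool)
                     \<Rightarrow> ('p \<Rightarrow> 'v strat) \<Rightarrow> bool" where
  "is_NE N ctrl goal sg =
     ((\<forall>i\<in>N. valid_strat (\<Union>(ctrl ` N)) (ctrl i) (sg i))
      \<and> (\<forall>i\<in>N. \<forall>s'. valid_strat (\<Union>(ctrl ` N)) (ctrl i) s'
            \<longrightarrow> goal i (play N (sg(i := s'))) \<longrightarrow> goal i (play N sg)))"

definition G_players :: "nat set" where "G_players = {1, 2, 3, 4}"

definition G_ctrl :: "'v set \<Rightarrow> 'v set \<Rightarrow> 'v \<Rightarrow> 'v \<Rightarrow> nat \<Rightarrow> 'v set" where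
  "G_ctrl X Y p q i = (if i = 1 then X else if i = 2 then Y else if i = 3 then {p}
                       else if i = 4 then {q} else {})"

definition G_goal :: "'v ldl \<Rightarrow> 'v \<Rightarrow> 'v \<Rightarrow> nat \<Rightarrow> (nat \<Rightarrow> 'v set) \<Rightarrow> bool" where
  "G_goal phi p q i pi =
     (if i = 1 then ex_sat phi pi
      else if i = 2 then all_sat (Neg phi) pi
      else if i = 3 then ex_sat phi pi \<or> first_sat (iff_f (Prop p) (Prop q)) pi
      else if i = 4 then ex_sat phi pi \<or> first_sat (Neg (iff_f (Prop p) (Prop q))) pi
      else False)"

definition synth :: "'v set \<Rightarrow> 'v set \<Rightarrow> 'v ldl \<Rightarrow> bool" where
  "synth X Y phi =
     (\<exists>sx. valid_strat (X \<union> Y) X sx \<and>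
        (\<forall>sy. valid_strat (X \<union> Y) Y sy \<longrightarrow>
           ex_sat phi (play {1::nat, 2} (\<lambda>i. if i = 1 then sx else sy))))"

end

theory Submission
  imports Defs "HOL-Library.Nat_Bijection"
begin

(* If the system has a winning strategy, let player 1 play it while everybody else stays
   silent: every unilateral deviation of player 2 still yields a play satisfying \<exists>\<phi>, so players
   1, 3 and 4 are satisfied and player 2 cannot improve.
   Conversely, \<exists>\<phi> holds on the play of every Nash equilibrium, for otherwise players 3 and 4
   play matching pennies on the first valuation and one of them deviates profitably. If the
   system had no winning strategy, the environment would beat the strategy that runs players 1,
   3 and 4 in parallel; player 2 switching to that counter-strategy enforces \<forall>\<not>\<phi>, a profitable
   deviation. *)

lemma states_Suc: "states N sg (Suc t) i = delta (sg i) (states N sg t i) (play N sg t)"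
  by (simp add: play_def Let_def)

declare states.simps(2) [simp del]

lemma states_in_St:
  assumes valid: "\<forall>j\<in>N. valid_strat (\<Union>(C ` N)) (C j) (sg j)" and "i \<in> N"
  shows "states N sg t i \<in> St (sg i)"
  using \<open>i \<in> N\<close>
proof (induction t arbitrary: i)
  case 0
  then show ?case using valid by (simp add: valid_strat_def)
next
  case (Suc t)
  have "out (sg j) (states N sg t j) \<subseteq> C j" if "j \<in> N" for j
    using Suc.IH[OF that] valid that unfolding valid_strat_def by blast
  then have "play N sg t \<subseteq> \<Union>(C ` N)"
    by (auto simp: play_def)
  then show ?case
    using Suc valid unfolding valid_strat_def by (simp add: states_Suc)
qed

lemma out_states_subset:
  assumes "\<forall>j\<in>N. valid_strat (\<Union>(C ` N)) (C j) (sg j)" and "i \<in> N"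
  shows "out (sg i) (states N sg t i) \<subseteq> C i"
  using states_in_St[OF assms] assms unfolding valid_strat_def by blast

lemma play_subset:
  assumes "\<forall>j\<in>N. valid_strat (\<Union>(C ` N)) (C j) (sg j)"
  shows "play N sg t \<subseteq> \<Union>(C ` N)"
  using out_states_subset[OF assms] by (auto simp: play_def)

lemma mem_play_0_fun_upd:
  assumes "\<forall>j\<in>N. out (sg j) (init (sg j)) \<subseteq> C j" and "i \<in> N" and "out s (init s) \<subseteq> C i"
  shows "x \<in> C i \<Longrightarrow> \<forall>j\<in>N - {i}. x \<notin> C j \<Longrightarrow>
           x \<in> play N (sg(i := s)) 0 \<longleftrightarrow> x \<in> out s (init s)"
    and "x \<notin> C i \<Longrightarrow> x \<in> play N (sg(i := s)) 0 \<longleftrightarrow> x \<in> play N sg 0"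
  using assms by (auto simp: play_def) (metis subsetD)+

lemma pl_sat_cong: "pl_atoms b \<subseteq> A \<Longrightarrow> v \<inter> A = w \<inter> A \<Longrightarrow> pl_sat v b = pl_sat w b"
  by (induction b) auto

lemma sat_cong:
  assumes "length tr' = length tr" and "\<forall>j<length tr. tr' ! j \<inter> A = tr ! j \<inter> A"
  shows "atoms a \<subseteq> A \<Longrightarrow> sat tr' i a = sat tr i a"
    and "re_atoms r \<subseteq> A \<Longrightarrow> rel tr' r = rel tr r"
proof (induction a and r arbitrary: i)
  case (Base b)
  have "pl_sat (tr' ! i) b = pl_sat (tr ! i) b" if "i < length tr" for i
    using Base that assms(2) by (intro pl_sat_cong[of b A]) auto
  then show ?case using assms(1) by auto
qed (use assms in auto)

lemma ex_sat_cong: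
  assumes "atoms phi \<subseteq> A" and "\<And>t. pi' t \<inter> A = pi t \<inter> A"
  shows "ex_sat phi pi' = ex_sat phi pi"
proof -
  have "trace_sat (prefix_of pi' k) phi = trace_sat (prefix_of pi k) phi" for k
    unfolding trace_sat_def
    by (rule sat_cong(1)[OF _ _ assms(1)]) (use assms(2) in \<open>auto simp: prefix_of_def simp del: upt_Suc\<close>)
  then show ?thesis by (simp add: ex_sat_def)
qed

(* Players are numerals; keep simp from rewriting player 1 to Suc 0. *)
declare One_nat_def [simp del]

lemma G_goal_simps:
  "G_goal phi p q 1 pi \<longleftrightarrow> ex_sat phi pi"
  "G_goal phi p q 2 pi \<longleftrightarrow> \<not> ex_sat phi pi"
  "G_goal phi p q 3 pi \<longleftrightarrow> ex_sat phi pi \<or> (p \<in> pi 0 \<longleftrightarrow> q \<in> pi 0)"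
  "G_goal phi p q 4 pi \<longleftrightarrow> ex_sat phi pi \<or> \<not> (p \<in> pi 0 \<longleftrightarrow> q \<in> pi 0)"
  by (auto simp: G_goal_def ex_sat_def all_sat_def first_sat_def trace_sat_def iff_f_def)

lemma G_ctrl_simps [simp]:
  "G_ctrl X Y p q 1 = X" "G_ctrl X Y p q 2 = Y" "G_ctrl X Y p q 3 = {p}" "G_ctrl X Y p q 4 = {q}"
  by (simp_all add: G_ctrl_def)

lemma in_G_players [simp]: "1 \<in> G_players" "2 \<in> G_players" "3 \<in> G_players" "4 \<in> G_players"
  by (simp_all add: G_players_def)

lemma Union_G_ctrl [simp]: "\<Union>(G_ctrl X Y p q ` G_players) = X \<union> Y \<union> {p, q}"
  by (auto simp: G_players_def G_ctrl_def)

lemma play_G_players: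
  "play G_players sg t = out (sg 1) (states G_players sg t 1) \<union> out (sg 2) (states G_players sg t 2)
     \<union> out (sg 3) (states G_players sg t 3) \<union> out (sg 4) (states G_players sg t 4)"
  by (auto simp: play_def G_players_def)

lemma play_duel:
  "play {1::nat, 2} sg t = out (sg 1) (states {1, 2} sg t 1) \<union> out (sg 2) (states {1, 2} sg t 2)"
  by (auto simp: play_def)

definition const_strat :: "'v set \<Rightarrow> 'v strat" where
  "const_strat V = \<lparr>St = {0}, init = 0, delta = \<lambda>_ _. 0, out = \<lambda>_. V\<rparr>"

lemma out_const_strat [simp]: "out (const_strat V) x = V"
  by (simp add: const_strat_def)

lemma valid_const_strat: "V \<subseteq> C \<Longrightarrow> valid_strat Phi C (const_strat V)"
  by (simp add: const_strat_def valid_strat_def)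

definition restrict_input :: "'v set \<Rightarrow> 'v strat \<Rightarrow> 'v strat" where
  "restrict_input A s = s\<lparr>delta := \<lambda>x v. delta s x (v \<inter> A)\<rparr>"

lemma restrict_input_simps [simp]:
  "St (restrict_input A s) = St s"
  "init (restrict_input A s) = init s"
  "delta (restrict_input A s) x v = delta s x (v \<inter> A)"
  "out (restrict_input A s) = out s"
  by (simp_all add: restrict_input_def)

lemma valid_restrict_input: "valid_strat A C s \<Longrightarrow> valid_strat Phi C (restrict_input A s)"
  by (simp add: valid_strat_def)

lemma valid_strat_mono: "valid_strat Phi C s \<Longrightarrow> A \<subseteq> Phi \<Longrightarrow> valid_strat A C s"
  unfolding valid_strat_def by blast

definition triple_encode :: "nat \<times> nat \<times> nat \<Rightarrow> nat" where
  "triple_encode x = prod_encode (fst x, prod_encode (snd x))"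

definition triple_decode :: "nat \<Rightarrow> nat \<times> nat \<times> nat" where
  "triple_decode n = (fst (prod_decode n), prod_decode (snd (prod_decode n)))"

lemma triple_encode_inverse [simp]: "triple_decode (triple_encode x) = x"
  by (simp add: triple_encode_def triple_decode_def)

(* A single player simulating s1, s3 and s4: it does not observe the moves of s3 and s4 in the
   two-player game, so it recomputes them from their simulated states. *)
definition coalition_strat :: "'v strat \<Rightarrow> 'v strat \<Rightarrow> 'v strat \<Rightarrow> 'v strat" where
  "coalition_strat s1 s3 s4 =
     \<lparr>St = triple_encode ` (St s1 \<times> St s3 \<times> St s4),
      init = triple_encode (init s1, init s3, init s4),
      delta = \<lambda>n v. (case triple_decode n of (a, b, c) \<Rightarrow>
                 let w = v \<union> out s3 b \<union> out s4 c
                 in triple_encode (delta s1 a w, delta s3 b w, delta s4 c w)),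
      out = \<lambda>n. out s1 (fst (triple_decode n))\<rparr>"

lemma coalition_strat_simps [simp]:
  "St (coalition_strat s1 s3 s4) = triple_encode ` (St s1 \<times> St s3 \<times> St s4)"
  "init (coalition_strat s1 s3 s4) = triple_encode (init s1, init s3, init s4)"
  "delta (coalition_strat s1 s3 s4) (triple_encode (a, b, c)) v =
     (let w = v \<union> out s3 b \<union> out s4 c in triple_encode (delta s1 a w, delta s3 b w, delta s4 c w))"
  "out (coalition_strat s1 s3 s4) (triple_encode (a, b, c)) = out s1 a"
  by (simp_all add: coalition_strat_def)

lemma valid_stratD:
  assumes "valid_strat Phi C s" and "x \<in> St s"
  shows "v \<subseteq> Phi \<Longrightarrow> delta s x v \<in> St s" and "out s x \<subseteq> C"
  using assms unfolding valid_strat_def by blast+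

lemma valid_coalition_strat:
  assumes v1: "valid_strat Phi C1 s1" and v3: "valid_strat Phi C3 s3" and v4: "valid_strat Phi C4 s4"
    and "A \<union> C3 \<union> C4 \<subseteq> Phi"
  shows "valid_strat A C1 (coalition_strat s1 s3 s4)"
  unfolding valid_strat_def
proof (intro conjI ballI allI impI)
  show "finite (St (coalition_strat s1 s3 s4))"
    and "init (coalition_strat s1 s3 s4) \<in> St (coalition_strat s1 s3 s4)"
    using v1 v3 v4 by (simp_all add: valid_strat_def)
next
  fix n v assume "n \<in> St (coalition_strat s1 s3 s4)" and "v \<subseteq> A"
  then obtain a b c where n: "n = triple_encode (a, b, c)"
    and abc: "a \<in> St s1" "b \<in> St s3" "c \<in> St s4"
    by auto
  have "v \<union> out s3 b \<union> out s4 c \<subseteq> Phi"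
    using \<open>v \<subseteq> A\<close> valid_stratD(2)[OF v3 abc(2)] valid_stratD(2)[OF v4 abc(3)] assms(4) by blast
  then show "delta (coalition_strat s1 s3 s4) n v \<in> St (coalition_strat s1 s3 s4)"
    using n valid_stratD(1)[OF v1 abc(1)] valid_stratD(1)[OF v3 abc(2)] valid_stratD(1)[OF v4 abc(3)]
    by (simp add: Let_def)
next
  fix n assume "n \<in> St (coalition_strat s1 s3 s4)"
  then show "out (coalition_strat s1 s3 s4) n \<subseteq> C1"
    using valid_stratD(2)[OF v1] by fastforce
qed

lemma play_G_players_eq_duel:
  assumes vx: "valid_strat (X \<union> Y) X sx" and vy: "valid_strat (X \<union> Y) Y sy"
    and sg: "sg 1 = restrict_input (X \<union> Y) sx" "sg 2 = sy" "sg 3 = const_strat {}" "sg 4 = const_strat {}"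
  shows "play G_players sg = play {1, 2} (\<lambda>i::nat. if i = 1 then sx else sy)"
proof -
  let ?duel = "\<lambda>i::nat. if i = 1 then sx else sy"
  have "\<Union>((\<lambda>i::nat. if i = 1 then X else Y) ` {1, 2}) = X \<union> Y"
    by auto
  then have "\<forall>i\<in>{1::nat, 2}. valid_strat (\<Union>((\<lambda>i::nat. if i = 1 then X else Y) ` {1, 2}))
          (if i = 1 then X else Y) (?duel i)"
    using vx vy by simp
  from play_subset[OF this] have duel_XY: "play {1, 2} ?duel t \<subseteq> X \<union> Y" for t
    by auto
  have play_eq: "play G_players sg t = play {1, 2} ?duel t"
    if "states G_players sg t 1 = states {1, 2} ?duel t 1"
      and "states G_players sg t 2 = states {1, 2} ?duel t 2" for t
    using that sg by (simp add: play_G_players play_duel)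
  have "states G_players sg t 1 = states {1, 2} ?duel t 1 \<and> states G_players sg t 2 = states {1, 2} ?duel t 2" for t
  proof (induction t)
    case 0
    then show ?case using sg by simp
  next
    case (Suc t)
    then have "play G_players sg t \<inter> (X \<union> Y) = play {1, 2} ?duel t"
      using play_eq duel_XY by blast
    with Suc sg show ?case
      by (simp add: states_Suc play_eq)
  qed
  then show ?thesis using play_eq by blast
qed

lemma play_duel_coalition_eq_play_G_players:
  assumes valid: "\<forall>i\<in>G_players. valid_strat (X \<union> Y \<union> {p, q}) (G_ctrl X Y p q i) (sg i)"
    and sg2: "sg 2 = restrict_input (X \<union> Y) sy" and "p \<notin> X \<union> Y" and "q \<notin> X \<union> Y"
  shows "play {1, 2} (\<lambda>i::nat. if i = 1 then coalition_strat (sg 1) (sg 3) (sg 4) else sy) t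
         = play G_players sg t \<inter> (X \<union> Y)"
proof -
  let ?duel = "\<lambda>i::nat. if i = 1 then coalition_strat (sg 1) (sg 3) (sg 4) else sy"
  let ?st = "states G_players sg"
  have out: "out (sg i) (?st t i) \<subseteq> G_ctrl X Y p q i" if "i \<in> G_players" for i t
    using out_states_subset[of G_players "G_ctrl X Y p q" sg] valid that by simp
  have out_12: "play G_players sg t \<inter> (X \<union> Y) = out (sg 1) (?st t 1) \<union> out sy (?st t 2)"
    and out_34: "play G_players sg t = play G_players sg t \<inter> (X \<union> Y) \<union> out (sg 3) (?st t 3) \<union> out (sg 4) (?st t 4)" for t
    using out[of 1 t] out[of 2 t] out[of 3 t] out[of 4 t] assms(3,4) sg2
    by (auto simp: play_G_players)
  have play_eq: "play {1, 2} ?duel t = play G_players sg t \<inter> (X \<union> Y)"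
    if "states {1, 2} ?duel t 1 = triple_encode (?st t 1, ?st t 3, ?st t 4)"
      and "states {1, 2} ?duel t 2 = ?st t 2" for t
    using that by (simp add: play_duel out_12)
  have "states {1, 2} ?duel t 1 = triple_encode (?st t 1, ?st t 3, ?st t 4) \<and> states {1, 2} ?duel t 2 = ?st t 2" for t
  proof (induction t)
    case 0
    then show ?case using sg2 by simp
  next
    case (Suc t)
    then have "play {1, 2} ?duel t = play G_players sg t \<inter> (X \<union> Y)"
      using play_eq by blast
    with Suc sg2 show ?case
      by (simp add: states_Suc Let_def flip: out_34)
  qed
  then show ?thesis using play_eq by blast
qed

lemma is_NE_deviation:
  assumes "is_NE N C goal sg" and "i \<in> N" and "valid_strat (\<Union>(C ` N)) (C i) s"
    and "goal i (play N (sg(i := s)))"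
  shows "goal i (play N sg)"
  using assms unfolding is_NE_def by blast

lemma ex_sat_play_of_is_NE:
  assumes NE: "is_NE G_players (G_ctrl X Y p q) (G_goal phi p q) sg"
    and "p \<notin> X \<union> Y" and "q \<notin> X \<union> Y" and "p \<noteq> q"
  shows "ex_sat phi (play G_players sg)"
proof (rule ccontr)
  assume not_phi: "\<not> ex_sat phi (play G_players sg)"
  define v0 where "v0 = play G_players sg 0"
  have "\<forall>i\<in>G_players. valid_strat (X \<union> Y \<union> {p, q}) (G_ctrl X Y p q i) (sg i)"
    using NE by (simp add: is_NE_def)
  then have init_out: "\<forall>j\<in>G_players. out (sg j) (init (sg j)) \<subseteq> G_ctrl X Y p q j"
    using out_states_subset[of G_players "G_ctrl X Y p q" sg _ 0] by simp
  have p_only_3: "\<forall>j\<in>G_players - {3}. p \<notin> G_ctrl X Y p q j"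
    and q_only_4: "\<forall>j\<in>G_players - {4}. q \<notin> G_ctrl X Y p q j"
    using assms(2-4) by (auto simp: G_players_def)
  define s3 where "s3 = const_strat (if q \<in> v0 then {p} else {})"
  have "p \<in> play G_players (sg(3 := s3)) 0 \<longleftrightarrow> q \<in> v0"
    using mem_play_0_fun_upd(1)[OF init_out, of 3 s3 p] p_only_3 by (simp add: s3_def)
  moreover have "q \<in> play G_players (sg(3 := s3)) 0 \<longleftrightarrow> q \<in> v0"
    using mem_play_0_fun_upd(2)[OF init_out, of 3 s3 q] assms(4) by (simp add: s3_def v0_def)
  ultimately have "G_goal phi p q 3 (play G_players (sg(3 := s3)))"
    by (simp add: G_goal_simps)
  then have "p \<in> v0 \<longleftrightarrow> q \<in> v0"
    using is_NE_deviation[OF NE, of 3 s3] not_phi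
    by (simp add: s3_def valid_const_strat G_goal_simps v0_def)
  define s4 where "s4 = const_strat (if p \<in> v0 then {} else {q})"
  have "q \<in> play G_players (sg(4 := s4)) 0 \<longleftrightarrow> p \<notin> v0"
    using mem_play_0_fun_upd(1)[OF init_out, of 4 s4 q] q_only_4 by (simp add: s4_def)
  moreover have "p \<in> play G_players (sg(4 := s4)) 0 \<longleftrightarrow> p \<in> v0"
    using mem_play_0_fun_upd(2)[OF init_out, of 4 s4 p] assms(4) by (simp add: s4_def v0_def)
  ultimately have "G_goal phi p q 4 (play G_players (sg(4 := s4)))"
    by (simp add: G_goal_simps)
  then have "\<not> (p \<in> v0 \<longleftrightarrow> q \<in> v0)"
    using is_NE_deviation[OF NE, of 4 s4] not_phi
    by (simp add: s4_def valid_const_strat G_goal_simps v0_def)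
  with \<open>p \<in> v0 \<longleftrightarrow> q \<in> v0\<close> show False by blast
qed

lemma is_NE_of_synth:
  assumes "synth X Y phi"
  shows "\<exists>sg. is_NE G_players (G_ctrl X Y p q) (G_goal phi p q) sg"
proof -
  obtain sx where vx: "valid_strat (X \<union> Y) X sx"
    and win: "\<And>sy. valid_strat (X \<union> Y) Y sy \<Longrightarrow>
                ex_sat phi (play {1::nat, 2} (\<lambda>i. if i = 1 then sx else sy))"
    using assms unfolding synth_def by blast
  define sg where "sg = (\<lambda>i::nat. if i = 1 then restrict_input (X \<union> Y) sx else const_strat {})"
  have phi_dev: "ex_sat phi (play G_players (sg(2 := s)))"
    if "valid_strat (X \<union> Y \<union> {p, q}) Y s" for s
  proof -
    have "valid_strat (X \<union> Y) Y s"
      using that valid_strat_mono by blast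
    with play_G_players_eq_duel[OF vx this, of "sg(2 := s)"] show ?thesis
      using win by (simp add: sg_def)
  qed
  have "sg(2 := const_strat {}) = sg"
    by (auto simp: sg_def)
  with phi_dev[of "const_strat {}"] have phi: "ex_sat phi (play G_players sg)"
    by (simp add: valid_const_strat)
  have "is_NE G_players (G_ctrl X Y p q) (G_goal phi p q) sg"
    unfolding is_NE_def Union_G_ctrl
  proof (intro conjI ballI allI impI)
    fix i assume "i \<in> G_players"
    then show "valid_strat (X \<union> Y \<union> {p, q}) (G_ctrl X Y p q i) (sg i)"
      using valid_restrict_input[OF vx] valid_const_strat by (auto simp: G_players_def sg_def)
  next
    fix i s assume "i \<in> G_players" and "valid_strat (X \<union> Y \<union> {p, q}) (G_ctrl X Y p q i) s"
      and "G_goal phi p q i (play G_players (sg(i := s)))"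
    then show "G_goal phi p q i (play G_players sg)"
      using phi phi_dev by (auto simp: G_players_def G_goal_simps)
  qed
  then show ?thesis by blast
qed

lemma synth_of_is_NE:
  assumes NE: "is_NE G_players (G_ctrl X Y p q) (G_goal phi p q) sg"
    and "p \<notin> X \<union> Y" and "q \<notin> X \<union> Y" and "p \<noteq> q" and "atoms phi \<subseteq> X \<union> Y"
  shows "synth X Y phi"
proof (rule ccontr)
  assume "\<not> synth X Y phi"
  have valid: "\<forall>i\<in>G_players. valid_strat (X \<union> Y \<union> {p, q}) (G_ctrl X Y p q i) (sg i)"
    using NE by (simp add: is_NE_def)
  let ?sx = "coalition_strat (sg 1) (sg 3) (sg 4)"
  from bspec[OF valid, of 1] bspec[OF valid, of 3] bspec[OF valid, of 4]
  have "valid_strat (X \<union> Y) X ?sx"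
    by (intro valid_coalition_strat) auto
  with \<open>\<not> synth X Y phi\<close> obtain sy where vy: "valid_strat (X \<union> Y) Y sy"
    and lose: "\<not> ex_sat phi (play {1::nat, 2} (\<lambda>i. if i = 1 then ?sx else sy))"
    unfolding synth_def by blast
  let ?sy' = "restrict_input (X \<union> Y) sy"
  define sg' where "sg' = sg(2 := ?sy')"
  have sg': "sg' 1 = sg 1" "sg' 2 = ?sy'" "sg' 3 = sg 3" "sg' 4 = sg 4"
    by (simp_all add: sg'_def)
  have vy': "valid_strat (X \<union> Y \<union> {p, q}) (G_ctrl X Y p q 2) ?sy'"
    using valid_restrict_input[OF vy] by simp
  with valid have "\<forall>i\<in>G_players. valid_strat (X \<union> Y \<union> {p, q}) (G_ctrl X Y p q i) (sg' i)"
    by (simp add: sg'_def)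
  from play_duel_coalition_eq_play_G_players[OF this sg'(2) assms(2,3)]
  have "play {1::nat, 2} (\<lambda>i. if i = 1 then ?sx else sy) t \<inter> (X \<union> Y)
        = play G_players sg' t \<inter> (X \<union> Y)" for t
    unfolding sg' by simp
  with lose have "\<not> ex_sat phi (play G_players sg')"
    using ex_sat_cong[OF assms(5)] by metis
  then have "\<not> ex_sat phi (play G_players sg)"
    using is_NE_deviation[OF NE _ vy'[folded Union_G_ctrl]] by (simp add: sg'_def G_goal_simps)
  with ex_sat_play_of_is_NE[OF NE assms(2-4)] show False by contradiction
qed

theorem lemma2:
  fixes X Y :: "'v set" and p q :: 'v and phi :: "'v ldl"
  assumes "finite X" and "finite Y" and "X \<inter> Y = {}"
    and "p \<notin> X \<union> Y" and "q \<notin> X \<union> Y" and "p \<noteq> q"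
    and "atoms phi \<subseteq> X \<union> Y"
  shows "synth X Y phi \<longleftrightarrow>
         (\<exists>sg. is_NE G_players (G_ctrl X Y p q) (G_goal phi p q) sg)"
proof
  show "synth X Y phi" if "\<exists>sg. is_NE G_players (G_ctrl X Y p q) (G_goal phi p q) sg"
    using that synth_of_is_NE[OF _ assms(4-7)] by blast
qed (rule is_NE_of_synth)

end
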